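(* Let $g\in L^p_w(\mathbb{R}^n)$ and set $(H*g)(t,x)=\int_{\mathbb{R}^n}H(t,x-y)g(y)\,dy$. Then there is a constant $c$, independent of $g$ and $t$, such that $$t^{1/2}\,\|(H*g)(t,\cdot)\|_{L^\infty(\mathbb{R}^n)}\le c\,\|g\|_{L^p_w(\mathbb{R}^n)}\qquad\text{for all }t>0.$$
   Context: Let $n\ge3$, $p>n$, $\alpha=1-\frac np$; $\alpha_1,\dots,\alpha_m\ge0$ with $\sum_{j=1}^m\alpha_j=\alpha$; $\bar x_1,\dots,\bar x_m\in\mathbb{R}^n_+$ fixed (not necessarily distinct) points; $w(x)=\prod_{j=1}^m|x-\bar x_j|^{\alpha_j}$. $L^p_w(\mathbb{R}^n)=\{u: wu\in L^p(\mathbb{R}^n)\}$ with norm $\|wu\|_{L^p(\mathbb{R}^n)}$. $H(t,x)=(4\pi t)^{-n/2}e^{-|x|^2/(4t)}$ is the heat kernel. *)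

theory Defs
  imports "HOL-Analysis.Analysis" "HOL-Probability.Essential_Supremum"
begin

definition upper_half :: "(real ^ 'n::{finite,linorder}) set" where
  "upper_half = {x. x $ (Max (UNIV :: 'n set)) > 0}"

definition weight :: "nat \<Rightarrow> (nat \<Rightarrow> real) \<Rightarrow> (nat \<Rightarrow> real ^ 'n::finite) \<Rightarrow> real ^ 'n \<Rightarrow> real" where
  "weight m a xb x = (\<Prod>j<m. norm (x - xb j) powr a j)"

definition in_Lpw :: "real \<Rightarrow> (real ^ 'n::finite \<Rightarrow> real) \<Rightarrow> (real ^ 'n \<Rightarrow> real) \<Rightarrow> bool" where
  "in_Lpw p w g \<longleftrightarrow> g \<in> borel_measurable lborel \<and> integrable lborel (\<lambda>x. \<bar>w x * g x\<bar> powr p)"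

definition Lpw_norm :: "real \<Rightarrow> (real ^ 'n::finite \<Rightarrow> real) \<Rightarrow> (real ^ 'n \<Rightarrow> real) \<Rightarrow> real" where
  "Lpw_norm p w g = (\<integral>x. \<bar>w x * g x\<bar> powr p \<partial>lborel) powr (1 / p)"

definition heat :: "real \<Rightarrow> real ^ 'n::finite \<Rightarrow> real" where
  "heat t x = (4 * pi * t) powr (- real CARD('n) / 2) * exp (- (norm x)\<^sup>2 / (4 * t))"

definition heat_conv :: "(real ^ 'n::finite \<Rightarrow> real) \<Rightarrow> real \<Rightarrow> real ^ 'n \<Rightarrow> real" where
  "heat_conv g t x = (\<integral>y. heat t (x - y) * g y \<partial>lborel)"

definition Linf_norm :: "(real ^ 'n::finite \<Rightarrow> real) \<Rightarrow> ereal" where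
  "Linf_norm f = esssup lborel (\<lambda>x. ereal \<bar>f x\<bar>)"

end

theory Submission
  imports Defs "HOL-Probability.Distributions"
begin

text \<open>Write \<open>(H*g)(t,x) = \<integral> (H(t,x-y) / w(y)) (w(y) g(y)) dy\<close> and apply Hoelder's inequality
  with \<open>q = p/(p-1)\<close>; it remains to show \<open>\<integral> (H(t,x-y) / w(y))\<^sup>q dy \<le> C t\<^sup>-\<^sup>q\<^sup>/\<^sup>2\<close>.
  As the exponents are nonnegative and sum to \<open>\<alpha>\<close>, \<open>w\<^sup>-\<^sup>q\<close> is bounded by \<open>\<Sum>\<^sub>j |y - x\<^sub>j|\<^sup>-\<^sup>b\<close> with
  \<open>b = q\<alpha> = (p-n)/(p-1) < 1\<close>, and \<open>|y - x\<^sub>j|\<close> dominates a single coordinate of \<open>y - x\<^sub>j\<close>.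
  Since \<open>H\<^sup>q\<close> is again a Gaussian, which factorises over the coordinates, each summand is a product
  of \<open>n - 1\<close> Gaussian integrals and one integral of a Gaussian against the integrable singularity
  \<open>|s|\<^sup>-\<^sup>b\<close>; tracking the dependence on \<open>t\<close> gives \<open>t\<^sup>-\<^sup>q\<^sup>/\<^sup>2\<close>.\<close>

lemma nn_integral_gaussian:
  fixes k z :: real
  assumes k: "k > 0"
  shows "(\<integral>\<^sup>+s. ennreal (exp (- k * (z - s)\<^sup>2)) \<partial>lborel) = ennreal (sqrt (pi / k))"
proof -
  define \<sigma> where "\<sigma> = 1 / sqrt (2 * k)"
  have \<sigma>: "\<sigma> > 0" "2 * \<sigma>\<^sup>2 = 1 / k"
    using k by (simp_all add: \<sigma>_def power_divide)
  have density: "exp (- k * (z - s)\<^sup>2) = sqrt (pi / k) * normal_density z \<sigma> s" for s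
  proof -
    have "sqrt (2 * pi * \<sigma>\<^sup>2) = sqrt (pi * (2 * \<sigma>\<^sup>2))"
      by (simp add: ac_simps)
    also have "\<dots> = sqrt (pi / k)"
      using \<sigma>(2) by simp
    finally have "sqrt (2 * pi * \<sigma>\<^sup>2) = sqrt (pi / k)" .
    moreover have "(s - z)\<^sup>2 / (2 * \<sigma>\<^sup>2) = k * (z - s)\<^sup>2"
      using \<sigma>(2) k by (simp add: power2_commute)
    ultimately show ?thesis
      using k by (simp add: normal_density_def)
  qed
  have "(\<integral>\<^sup>+s. ennreal (exp (- k * (z - s)\<^sup>2)) \<partial>lborel)
      = ennreal (sqrt (pi / k)) * (\<integral>\<^sup>+s. ennreal (normal_density z \<sigma> s) \<partial>lborel)"
    unfolding density using k by (simp add: ennreal_mult nn_integral_cmult)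
  also have "(\<integral>\<^sup>+s. ennreal (normal_density z \<sigma> s) \<partial>lborel) = 1"
    using \<sigma> by (subst nn_integral_eq_integral) auto
  finally show ?thesis
    by simp
qed

text \<open>The singular factor \<open>|s|\<^sup>-\<^sup>b\<close> takes the value \<open>\<infinity>\<close> at \<open>0\<close>, because \<open>0 powr -b = 0\<close>
  would make it useless as a pointwise upper bound there.\<close>
definition singular_powr :: "real \<Rightarrow> real \<Rightarrow> ennreal" where
  "singular_powr b s = (if s = 0 then \<infinity> else ennreal (\<bar>s\<bar> powr - b))"

lemma singular_powr_measurable [measurable]: "singular_powr b \<in> borel_measurable borel"
  unfolding singular_powr_def by measurable

lemma nn_integral_singular_powr_interval:
  assumes b: "b < 1" and c: "c \<ge> 0"
  shows "(\<integral>\<^sup>+s. indicator {-c..c} s * singular_powr b s \<partial>lborel) \<le> ennreal (2 * c powr (1 - b) / (1 - b))"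
proof -
  define h where "h s = indicator {0..c} s * singular_powr b s" for s
  have [measurable]: "h \<in> borel_measurable borel"
    unfolding h_def by measurable
  have half: "(\<integral>\<^sup>+s. h s \<partial>lborel) = ennreal (c powr (1 - b) / (1 - b))"
  proof -
    have powr_integral: "((\<lambda>s. s powr - b) has_integral (c powr (1 - b) / (1 - b))) {0..c}"
      using has_integral_powr_from_0[of "- b" c] b c by (simp add: add.commute)
    have "(\<integral>\<^sup>+s. ennreal (s powr - b) * indicator {0..c} s \<partial>lborel) = ennreal (c powr (1 - b) / (1 - b))"
      by (rule nn_integral_has_integral_lebesgue'[OF _ powr_integral]) simp
    moreover have "AE s in lborel. h s = ennreal (s powr - b) * indicator {0..c} s"
      using AE_lborel_singleton[of 0]
      by eventually_elim (auto simp: h_def singular_powr_def indicator_def)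
    ultimately show ?thesis
      by (simp add: nn_integral_cong_AE)
  qed
  have "(\<integral>\<^sup>+s. indicator {-c..c} s * singular_powr b s \<partial>lborel) \<le> (\<integral>\<^sup>+s. h s + h (- s) \<partial>lborel)"
    by (intro nn_integral_mono) (auto simp: h_def singular_powr_def indicator_def)
  also have "\<dots> = (\<integral>\<^sup>+s. h s \<partial>lborel) + (\<integral>\<^sup>+s. h (- s) \<partial>lborel)"
    by (rule nn_integral_add) auto
  also have "(\<integral>\<^sup>+s. h (- s) \<partial>lborel) = (\<integral>\<^sup>+s. h s \<partial>lborel)"
    using nn_integral_real_affine[of h "- 1" 0] by simp
  finally show ?thesis
    using b by (simp add: half ennreal_plus[symmetric] del: ennreal_plus)
qed

lemma nn_integral_gaussian_singular_powr_split:
  assumes k: "k > 0" and b: "0 \<le> b" "b < 1" and c: "c > 0"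
  shows "(\<integral>\<^sup>+s. ennreal (exp (- k * (z - s)\<^sup>2)) * singular_powr b (s - d) \<partial>lborel)
     \<le> ennreal (2 * c powr (1 - b) / (1 - b) + c powr - b * sqrt (pi / k))"
proof -
  txt \<open>Near \<open>d\<close> bound the Gaussian by \<open>1\<close>, away from \<open>d\<close> bound the singular factor by \<open>c\<^sup>-\<^sup>b\<close>.\<close>
  define h where "h s = indicator {-c..c} s * singular_powr b s" for s
  have [measurable]: "h \<in> borel_measurable borel"
    unfolding h_def by measurable
  have split: "ennreal (exp (- k * (z - s)\<^sup>2)) * singular_powr b (s - d)
      \<le> h (s - d) + ennreal (c powr - b) * ennreal (exp (- k * (z - s)\<^sup>2))" for s
  proof (cases "\<bar>s - d\<bar> \<le> c")
    case True
    have "ennreal (exp (- k * (z - s)\<^sup>2)) * singular_powr b (s - d) \<le> 1 * singular_powr b (s - d)"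
      using k by (intro mult_right_mono) auto
    also have "\<dots> = h (s - d)"
      using True by (simp add: h_def abs_le_iff)
    finally show ?thesis
      by (simp add: add_increasing2)
  next
    case False
    then have "singular_powr b (s - d) \<le> ennreal (c powr - b)"
      using b c by (auto simp: singular_powr_def intro!: ennreal_leI powr_mono2')
    then have "ennreal (exp (- k * (z - s)\<^sup>2)) * singular_powr b (s - d)
        \<le> ennreal (c powr - b) * ennreal (exp (- k * (z - s)\<^sup>2))"
      by (subst mult.commute) (rule mult_left_mono; simp)
    then show ?thesis
      by (simp add: add_increasing)
  qed
  have "(\<integral>\<^sup>+s. ennreal (exp (- k * (z - s)\<^sup>2)) * singular_powr b (s - d) \<partial>lborel)
      \<le> (\<integral>\<^sup>+s. h (s - d) + ennreal (c powr - b) * ennreal (exp (- k * (z - s)\<^sup>2)) \<partial>lborel)"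
    by (rule nn_integral_mono) (rule split)
  also have "\<dots> = (\<integral>\<^sup>+s. h (s - d) \<partial>lborel) + ennreal (c powr - b) * ennreal (sqrt (pi / k))"
    using nn_integral_gaussian[OF k, of z] by (simp add: nn_integral_add nn_integral_cmult)
  also have "(\<integral>\<^sup>+s. h (s - d) \<partial>lborel) = (\<integral>\<^sup>+s. h s \<partial>lborel)"
    using nn_integral_real_affine[of h 1 "- d"] by simp
  also have "\<dots> \<le> ennreal (2 * c powr (1 - b) / (1 - b))"
    unfolding h_def using b c by (intro nn_integral_singular_powr_interval) auto
  finally have "(\<integral>\<^sup>+s. ennreal (exp (- k * (z - s)\<^sup>2)) * singular_powr b (s - d) \<partial>lborel)
      \<le> ennreal (2 * c powr (1 - b) / (1 - b)) + ennreal (c powr - b) * ennreal (sqrt (pi / k))"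
    by (simp add: add_right_mono)
  also have "\<dots> = ennreal (2 * c powr (1 - b) / (1 - b) + c powr - b * sqrt (pi / k))"
    using b k by (simp add: ennreal_plus ennreal_mult)
  finally show ?thesis .
qed

lemma nn_integral_gaussian_singular_powr:
  assumes k: "k > 0" and b: "0 \<le> b" "b < 1"
  shows "(\<integral>\<^sup>+s. ennreal (exp (- k * (z - s)\<^sup>2)) * singular_powr b (s - d) \<partial>lborel)
     \<le> ennreal ((2 / (1 - b) + sqrt pi) * k powr (- (1 - b) / 2))"
proof -
  define c where "c = k powr (- 1 / 2)"
  have "k powr (- 1 / 2) = inverse (k powr (1 / 2))"
    using powr_minus[of k "1 / 2"] by (simp only: minus_divide_left)
  moreover have "sqrt (pi / k) = sqrt pi / k powr (1 / 2)"
    using k by (simp add: real_sqrt_divide powr_half_sqrt)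
  ultimately have sqrt_scaling: "sqrt (pi / k) = sqrt pi * k powr (- 1 / 2)"
    by (simp only: divide_inverse)
  have "c powr - b * sqrt (pi / k) = sqrt pi * (k powr (b / 2) * k powr (- 1 / 2))"
    unfolding sqrt_scaling c_def by (simp add: powr_powr)
  also have "\<dots> = sqrt pi * k powr (- (1 - b) / 2)"
    by (simp add: powr_add[symmetric] diff_divide_distrib)
  finally have far: "c powr - b * sqrt (pi / k) = sqrt pi * k powr (- (1 - b) / 2)" .
  have near: "c powr (1 - b) = k powr (- (1 - b) / 2)"
    unfolding c_def powr_powr by (rule arg_cong[where f = "\<lambda>e. k powr e"]) (simp add: field_simps)
  have "c > 0"
    using k by (simp add: c_def)
  then show ?thesis
    using nn_integral_gaussian_singular_powr_split[OF k b, of c z d]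
    unfolding far near by (simp add: distrib_right)
qed

lemma nn_integral_gaussian_mult_coordinate:
  fixes x :: "'a::euclidean_space" and f :: "real \<Rightarrow> ennreal"
  assumes [measurable]: "f \<in> borel_measurable borel" and e: "e \<in> Basis" and k: "k > 0"
  shows "(\<integral>\<^sup>+y. ennreal (exp (- k * (norm (x - y))\<^sup>2)) * f (y \<bullet> e) \<partial>lborel)
    = (\<integral>\<^sup>+s. ennreal (exp (- k * (x \<bullet> e - s)\<^sup>2)) * f s \<partial>lborel) * ennreal (sqrt (pi / k) ^ (DIM('a) - 1))"
proof -
  define h where "h u s = ennreal (exp (- k * (x \<bullet> u - s)\<^sup>2)) * (if u = e then f s else 1)" for u s
  have [measurable]: "h u \<in> borel_measurable borel" for u
    unfolding h_def by measurable
  have product: "ennreal (exp (- k * (norm (x - y))\<^sup>2)) * f (y \<bullet> e) = (\<Prod>u\<in>Basis. h u (y \<bullet> u))" for y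
  proof -
    have "(norm (x - y))\<^sup>2 = (\<Sum>u\<in>Basis. ((x - y) \<bullet> u) * ((x - y) \<bullet> u))"
      unfolding power2_norm_eq_inner by (rule euclidean_inner)
    then have "(norm (x - y))\<^sup>2 = (\<Sum>u\<in>Basis. (x \<bullet> u - y \<bullet> u)\<^sup>2)"
      by (simp add: inner_diff_left power2_eq_square)
    then have "ennreal (exp (- k * (norm (x - y))\<^sup>2)) = (\<Prod>u\<in>Basis. ennreal (exp (- k * (x \<bullet> u - y \<bullet> u)\<^sup>2)))"
      by (simp add: sum_distrib_left exp_sum prod_ennreal flip: sum_negf)
    moreover have "f (y \<bullet> e) = (\<Prod>u\<in>Basis. if u = e then f (y \<bullet> u) else 1)"
      using e by simp
    ultimately show ?thesis
      by (simp add: h_def prod.distrib)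
  qed
  have "(\<integral>\<^sup>+y. ennreal (exp (- k * (norm (x - y))\<^sup>2)) * f (y \<bullet> e) \<partial>lborel) = (\<Prod>u\<in>Basis. (\<integral>\<^sup>+s. h u s \<partial>lborel))"
    unfolding product by (rule nn_integral_lborel_prod) auto
  also have "\<dots> = (\<integral>\<^sup>+s. h e s \<partial>lborel) * (\<Prod>u\<in>Basis - {e}. (\<integral>\<^sup>+s. h u s \<partial>lborel))"
    using e by (simp add: prod.remove)
  also have "(\<Prod>u\<in>Basis - {e}. (\<integral>\<^sup>+s. h u s \<partial>lborel)) = ennreal (sqrt (pi / k) ^ (DIM('a) - 1))"
  proof -
    have "(\<integral>\<^sup>+s. h u s \<partial>lborel) = ennreal (sqrt (pi / k))" if "u \<in> Basis - {e}" for u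
      using that nn_integral_gaussian[OF k, of "x \<bullet> u"] by (simp add: h_def)
    then show ?thesis
      using e k by (simp add: ennreal_power card_Diff_singleton)
  qed
  finally show ?thesis
    by (simp add: h_def)
qed

lemma nn_integral_gaussian_singular_powr_coordinate:
  fixes x d :: "'a::euclidean_space"
  assumes e: "e \<in> Basis" and k: "k > 0" and b: "0 \<le> b" "b < 1"
  shows "(\<integral>\<^sup>+y. ennreal (exp (- k * (norm (x - y))\<^sup>2)) * singular_powr b ((y - d) \<bullet> e) \<partial>lborel)
     \<le> ennreal (pi powr ((real DIM('a) - 1) / 2) * (2 / (1 - b) + sqrt pi) * k powr (- (real DIM('a) - b) / 2))"
proof -
  have scaling: "sqrt (pi / k) ^ (DIM('a) - 1) * k powr (- (1 - b) / 2)
      = pi powr ((real DIM('a) - 1) / 2) * k powr (- (real DIM('a) - b) / 2)"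
  proof -
    have sqrt_powr: "sqrt (pi / k) = (pi / k) powr (1 / 2)"
      using k by (subst powr_half_sqrt) auto
    have "sqrt (pi / k) ^ (DIM('a) - 1) = (pi / k) powr ((real DIM('a) - 1) / 2)"
      unfolding sqrt_powr using k by (subst powr_power) (auto simp: of_nat_diff Suc_leI)
    moreover have "- (real DIM('a) - b) / 2 = - (1 - b) / 2 - (real DIM('a) - 1) / 2"
      by (simp add: field_simps)
    then have "k powr (- (real DIM('a) - b) / 2) = k powr (- (1 - b) / 2) / k powr ((real DIM('a) - 1) / 2)"
      by (metis powr_diff)
    ultimately show ?thesis
      by (simp add: powr_divide)
  qed
  have "(\<integral>\<^sup>+y. ennreal (exp (- k * (norm (x - y))\<^sup>2)) * singular_powr b ((y - d) \<bullet> e) \<partial>lborel)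
      = (\<integral>\<^sup>+s. ennreal (exp (- k * (x \<bullet> e - s)\<^sup>2)) * singular_powr b (s - d \<bullet> e) \<partial>lborel)
        * ennreal (sqrt (pi / k) ^ (DIM('a) - 1))"
    using nn_integral_gaussian_mult_coordinate[OF _ e k, of "\<lambda>s. singular_powr b (s - d \<bullet> e)" x]
    by (simp add: inner_diff_left)
  also have "\<dots> \<le> ennreal ((2 / (1 - b) + sqrt pi) * k powr (- (1 - b) / 2)) * ennreal (sqrt (pi / k) ^ (DIM('a) - 1))"
    using nn_integral_gaussian_singular_powr[OF k b] by (intro mult_right_mono) auto
  also have "\<dots> = ennreal ((2 / (1 - b) + sqrt pi) * (sqrt (pi / k) ^ (DIM('a) - 1) * k powr (- (1 - b) / 2)))"
    by (subst ennreal_mult[symmetric]) (use b k in \<open>auto simp: mult_ac\<close>)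
  also have "\<dots> = ennreal (pi powr ((real DIM('a) - 1) / 2) * (2 / (1 - b) + sqrt pi) * k powr (- (real DIM('a) - b) / 2))"
    unfolding scaling by (simp only: mult_ac)
  finally show ?thesis .
qed

lemma inverse_prod_powr_le_sum_powr:
  fixes r a :: "'i \<Rightarrow> real"
  assumes fin: "finite J" and ne: "J \<noteq> {}" and r: "\<And>j. j \<in> J \<Longrightarrow> r j > 0"
    and a: "\<And>j. j \<in> J \<Longrightarrow> a j \<ge> 0" and q: "q > 0"
  shows "inverse (\<Prod>j\<in>J. r j powr a j) powr q \<le> (\<Sum>j\<in>J. r j powr - (sum a J * q))"
proof -
  txt \<open>Every factor is at least \<open>(min r)\<^sup>a\<^sup>j\<close>, and \<open>min r\<close> is one of the summands.\<close>
  have "Min (r ` J) \<in> r ` J"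
    using fin ne by (intro Min_in) auto
  then obtain j0 where j0: "j0 \<in> J" "Min (r ` J) = r j0"
    by auto
  have r0: "r j0 > 0"
    using j0(1) r by blast
  have r0_le: "r j0 \<le> r j" if "j \<in> J" for j
    using fin that by (simp flip: j0(2))
  have "r j0 powr sum a J = (\<Prod>j\<in>J. r j0 powr a j)"
    using r0 by (intro powr_sum) auto
  also have "\<dots> \<le> (\<Prod>j\<in>J. r j powr a j)"
    using r0 r0_le a by (intro prod_mono) (auto intro: powr_mono2)
  finally have "inverse (\<Prod>j\<in>J. r j powr a j) \<le> inverse (r j0 powr sum a J)"
    using r0 by (intro le_imp_inverse_le) auto
  then have "inverse (\<Prod>j\<in>J. r j powr a j) powr q \<le> inverse (r j0 powr sum a J) powr q"
    using q by (intro powr_mono2) (auto intro!: prod_nonneg)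
  also have "\<dots> = r j0 powr - (sum a J * q)"
    using r0 by (simp add: powr_minus[symmetric] powr_powr)
  also have "\<dots> \<le> (\<Sum>j\<in>J. r j powr - (sum a J * q))"
    using j0 fin by (intro member_le_sum) auto
  finally show ?thesis .
qed

lemma Youngs_inequality_scaled:
  fixes a b \<alpha> \<beta> :: real
  assumes pq: "p > 1" "q > 1" "1 / p + 1 / q = 1" and ab: "a \<ge> 0" "b \<ge> 0" and \<alpha>\<beta>: "\<alpha> > 0" "\<beta> > 0"
  shows "a * b \<le> \<alpha> * \<beta> / (\<alpha> powr q * q) * a powr q + \<alpha> * \<beta> / (\<beta> powr p * p) * b powr p"
proof -
  have "(a / \<alpha>) * (b / \<beta>) \<le> (a / \<alpha>) powr q / q + (b / \<beta>) powr p / p"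
    using assms by (intro Youngs_inequality) (auto simp: add.commute)
  also have "\<dots> = a powr q / (\<alpha> powr q * q) + b powr p / (\<beta> powr p * p)"
    using ab \<alpha>\<beta> by (simp add: powr_divide)
  finally show ?thesis
    using \<alpha>\<beta> by (simp add: field_simps)
qed

lemma nn_integral_mult_le_Holder_pos:
  fixes K F :: "'a \<Rightarrow> real"
  assumes [measurable]: "K \<in> borel_measurable M" "F \<in> borel_measurable M"
    and nonneg: "\<And>y. K y \<ge> 0" "\<And>y. F y \<ge> 0"
    and pq: "p > 1" "q > 1" "1 / p + 1 / q = 1"
    and K: "(\<integral>\<^sup>+y. ennreal (K y powr q) \<partial>M) \<le> ennreal A"
    and F: "(\<integral>\<^sup>+y. ennreal (F y powr p) \<partial>M) \<le> ennreal B"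
    and AB: "A > 0" "B > 0"
  shows "(\<integral>\<^sup>+y. ennreal (K y * F y) \<partial>M) \<le> ennreal (A powr (1 / q) * B powr (1 / p))"
proof -
  define \<alpha> where "\<alpha> = A powr (1 / q)"
  define \<beta> where "\<beta> = B powr (1 / p)"
  have \<alpha>: "\<alpha> > 0" "\<alpha> powr q = A" and \<beta>: "\<beta> > 0" "\<beta> powr p = B"
    using AB pq by (auto simp: \<alpha>_def \<beta>_def powr_powr)
  define c1 where "c1 = \<alpha> * \<beta> / (A * q)"
  define c2 where "c2 = \<alpha> * \<beta> / (B * p)"
  have c: "c1 \<ge> 0" "c2 \<ge> 0"
    using \<alpha> \<beta> AB pq by (simp_all add: c1_def c2_def)
  have "(\<integral>\<^sup>+y. ennreal (K y * F y) \<partial>M)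
      \<le> (\<integral>\<^sup>+y. ennreal c1 * ennreal (K y powr q) + ennreal c2 * ennreal (F y powr p) \<partial>M)"
  proof (intro nn_integral_mono)
    fix y
    have "ennreal (K y * F y) \<le> ennreal (c1 * K y powr q + c2 * F y powr p)"
      using Youngs_inequality_scaled[OF pq nonneg[of y] \<alpha>(1) \<beta>(1)]
      by (intro ennreal_leI) (simp add: c1_def c2_def \<alpha>(2) \<beta>(2))
    also have "\<dots> = ennreal c1 * ennreal (K y powr q) + ennreal c2 * ennreal (F y powr p)"
      using c by (simp add: ennreal_plus ennreal_mult)
    finally show "ennreal (K y * F y) \<le> ennreal c1 * ennreal (K y powr q) + ennreal c2 * ennreal (F y powr p)" .
  qed
  also have "\<dots> = ennreal c1 * (\<integral>\<^sup>+y. ennreal (K y powr q) \<partial>M) + ennreal c2 * (\<integral>\<^sup>+y. ennreal (F y powr p) \<partial>M)"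
    by (simp add: nn_integral_add nn_integral_cmult)
  also have "\<dots> \<le> ennreal c1 * ennreal A + ennreal c2 * ennreal B"
    using K F by (intro add_mono mult_left_mono) auto
  also have "\<dots> = ennreal (c1 * A + c2 * B)"
    using c AB by (simp add: ennreal_plus ennreal_mult)
  also have "c1 * A + c2 * B = \<alpha> * \<beta> * (1 / p + 1 / q)"
    using AB pq by (simp add: c1_def c2_def field_simps)
  finally show ?thesis
    using pq by (simp add: \<alpha>_def \<beta>_def)
qed

lemma nn_integral_mult_le_Holder:
  fixes K F :: "'a \<Rightarrow> real"
  assumes [measurable]: "K \<in> borel_measurable M" "F \<in> borel_measurable M"
    and nonneg: "\<And>y. K y \<ge> 0" "\<And>y. F y \<ge> 0"
    and pq: "p > 1" "q > 1" "1 / p + 1 / q = 1"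
    and K: "(\<integral>\<^sup>+y. ennreal (K y powr q) \<partial>M) \<le> ennreal A"
    and F: "(\<integral>\<^sup>+y. ennreal (F y powr p) \<partial>M) \<le> ennreal B"
    and AB: "A \<ge> 0" "B \<ge> 0"
  shows "(\<integral>\<^sup>+y. ennreal (K y * F y) \<partial>M) \<le> ennreal (A powr (1 / q) * B powr (1 / p))"
proof -
  have vanish: "AE y in M. G y = 0"
    if "(\<integral>\<^sup>+y. ennreal (G y powr r) \<partial>M) \<le> 0" "G \<in> borel_measurable M" for G :: "'a \<Rightarrow> real" and r
  proof -
    have "AE y in M. ennreal (G y powr r) = 0"
      using that by (subst nn_integral_0_iff_AE[symmetric]) auto
    then show ?thesis
      by eventually_elim auto
  qed
  consider "A = 0" | "B = 0" | "A > 0" "B > 0"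
    using AB by linarith
  then show ?thesis
  proof cases
    case 1
    then have "AE y in M. K y = 0"
      using K by (intro vanish) auto
    then have "(\<integral>\<^sup>+y. ennreal (K y * F y) \<partial>M) = 0"
      by (subst nn_integral_0_iff_AE) (auto elim: AE_mp)
    then show ?thesis
      by simp
  next
    case 2
    then have "AE y in M. F y = 0"
      using F by (intro vanish) auto
    then have "(\<integral>\<^sup>+y. ennreal (K y * F y) \<partial>M) = 0"
      by (subst nn_integral_0_iff_AE) (auto elim: AE_mp)
    then show ?thesis
      by simp
  next
    case 3
    then show ?thesis
      using nn_integral_mult_le_Holder_pos[OF assms(1-7) K F] by blast
  qed
qed

lemma weight_pos: "y \<notin> xb ` {..<m} \<Longrightarrow> weight m a xb y > 0"
  unfolding weight_def by (intro prod_pos) auto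

lemma weight_eq_0: "y \<in> xb ` {..<m} \<Longrightarrow> weight m a xb y = 0"
  unfolding weight_def by (auto intro: prod_zero)

lemma weight_measurable [measurable]: "weight m a xb \<in> borel_measurable borel"
  unfolding weight_def by measurable

lemma AE_weight_neq_0: "AE y in lborel. weight m a xb y \<noteq> 0"
proof -
  have "AE y in lborel. y \<notin> xb ` {..<m}"
    by (intro AE_not_in finite_imp_null_set_lborel) auto
  then show ?thesis
    by eventually_elim (metis less_irrefl weight_pos)
qed

lemma heat_nonneg: "heat t v \<ge> 0"
  by (simp add: heat_def)

lemma heat_measurable [measurable]: "heat t \<in> borel_measurable borel"
  unfolding heat_def by measurable

lemma heat_powr:
  fixes v :: "real ^ 'n::finite"
  shows "heat t v powr q = (4 * pi * t) powr (- real CARD('n) / 2 * q) * exp (- (q / (4 * t)) * (norm v)\<^sup>2)"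
proof -
  have "heat t v powr q = ((4 * pi * t) powr (- real CARD('n) / 2)) powr q * exp (- (norm v)\<^sup>2 / (4 * t)) powr q"
    unfolding heat_def by (rule powr_mult)
  then show ?thesis
    by (simp add: powr_powr powr_def)
qed

lemma heat_over_weight_powr_le:
  fixes xb :: "nat \<Rightarrow> real ^ 'n::finite"
  assumes e: "e \<in> Basis" and m: "m > 0" and q: "q > 0" and a: "\<And>j. j < m \<Longrightarrow> a j \<ge> 0"
  shows "ennreal (\<bar>heat t (x - y) / weight m a xb y\<bar> powr q)
    \<le> ennreal ((4 * pi * t) powr (- real CARD('n) / 2 * q)) *
       (\<Sum>j<m. ennreal (exp (- (q / (4 * t)) * (norm (x - y))\<^sup>2)) * singular_powr ((\<Sum>i<m. a i) * q) ((y - xb j) \<bullet> e))"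
proof (cases "y \<in> xb ` {..<m}")
  case True
  then show ?thesis
    by (simp add: weight_eq_0)
next
  case False
  define b where "b = (\<Sum>j<m. a j) * q"
  have b: "b \<ge> 0"
    unfolding b_def using a q by (intro mult_nonneg_nonneg sum_nonneg) auto
  define E where "E = exp (- (q / (4 * t)) * (norm (x - y))\<^sup>2)"
  define Ct where "Ct = (4 * pi * t) powr (- real CARD('n) / 2 * q)"
  have w: "weight m a xb y > 0"
    using False by (rule weight_pos)
  have "\<bar>heat t (x - y) / weight m a xb y\<bar> powr q = heat t (x - y) powr q * inverse (weight m a xb y) powr q"
    using w heat_nonneg[of t "x - y"] by (simp add: divide_inverse powr_mult)
  also have "\<dots> \<le> Ct * E * (\<Sum>j<m. norm (y - xb j) powr - b)"
    unfolding heat_powr Ct_def E_def b_def weight_def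
    using False m a q by (intro mult_left_mono inverse_prod_powr_le_sum_powr) auto
  finally have "ennreal (\<bar>heat t (x - y) / weight m a xb y\<bar> powr q) \<le> ennreal (Ct * E * (\<Sum>j<m. norm (y - xb j) powr - b))"
    by (rule ennreal_leI)
  also have "\<dots> = ennreal Ct * (\<Sum>j<m. ennreal E * ennreal (norm (y - xb j) powr - b))"
    by (simp add: Ct_def E_def ennreal_mult sum_distrib_left mult.assoc sum_ennreal[symmetric] del: sum_ennreal)
  also have "\<dots> \<le> ennreal Ct * (\<Sum>j<m. ennreal E * singular_powr b ((y - xb j) \<bullet> e))"
  proof (intro mult_left_mono sum_mono)
    fix j
    show "ennreal (norm (y - xb j) powr - b) \<le> singular_powr b ((y - xb j) \<bullet> e)"
      using Basis_le_norm[OF e, of "y - xb j"] b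
      by (auto simp: singular_powr_def intro!: ennreal_leI powr_mono2')
  qed auto
  finally show ?thesis
    by (simp add: Ct_def E_def b_def)
qed

lemma nn_integral_heat_over_weight_powr_le:
  fixes xb :: "nat \<Rightarrow> real ^ 'n::finite"
  assumes m: "m > 0" and q: "q > 0" and t: "t > 0" and a: "\<And>j. j < m \<Longrightarrow> a j \<ge> 0"
    and b_lt: "(\<Sum>j<m. a j) * q < 1"
  defines "n \<equiv> real CARD('n)" and "b \<equiv> (\<Sum>j<m. a j) * q"
  shows "(\<integral>\<^sup>+y. ennreal (\<bar>heat t (x - y) / weight m a xb y\<bar> powr q) \<partial>lborel)
    \<le> ennreal (real m * (4 * pi * t) powr (- n / 2 * q)
        * (pi powr ((n - 1) / 2) * (2 / (1 - b) + sqrt pi) * (q / (4 * t)) powr (- (n - b) / 2)))"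
proof -
  have b: "0 \<le> b" "b < 1"
    using a q b_lt unfolding b_def by (auto intro!: mult_nonneg_nonneg sum_nonneg)
  obtain e :: "real ^ 'n" where e: "e \<in> Basis"
    using nonempty_Basis by blast
  define k where "k = q / (4 * t)"
  define Ct where "Ct = (4 * pi * t) powr (- n / 2 * q)"
  define D where "D = pi powr ((n - 1) / 2) * (2 / (1 - b) + sqrt pi) * k powr (- (n - b) / 2)"
  have k: "k > 0"
    using q t by (simp add: k_def)
  have "(\<integral>\<^sup>+y. ennreal (\<bar>heat t (x - y) / weight m a xb y\<bar> powr q) \<partial>lborel)
      \<le> (\<integral>\<^sup>+y. ennreal Ct * (\<Sum>j<m. ennreal (exp (- k * (norm (x - y))\<^sup>2)) * singular_powr b ((y - xb j) \<bullet> e)) \<partial>lborel)"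
    unfolding Ct_def k_def b_def n_def by (rule nn_integral_mono, rule heat_over_weight_powr_le[OF e m q a])
  also have "\<dots> = ennreal Ct * (\<Sum>j<m. \<integral>\<^sup>+y. ennreal (exp (- k * (norm (x - y))\<^sup>2)) * singular_powr b ((y - xb j) \<bullet> e) \<partial>lborel)"
    by (simp add: nn_integral_cmult nn_integral_sum)
  also have "\<dots> \<le> ennreal Ct * (\<Sum>j<m. ennreal D)"
    using nn_integral_gaussian_singular_powr_coordinate[OF e k b]
    by (intro mult_left_mono sum_mono) (simp_all add: D_def n_def)
  also have "\<dots> = ennreal (real m * Ct * D)"
    using b by (simp add: Ct_def D_def ennreal_mult'' ennreal_of_nat_eq_real_of_nat mult_ac)
  finally show ?thesis
    by (simp add: Ct_def D_def k_def)
qed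

lemma nn_integral_heat_over_weight_powr_bound:
  fixes xb :: "nat \<Rightarrow> real ^ 'n::finite"
  assumes m: "m > 0" and q: "q > 0" and a: "\<And>j. j < m \<Longrightarrow> a j \<ge> 0" and b_lt: "(\<Sum>j<m. a j) * q < 1"
  shows "\<exists>C \<ge> 0. \<forall>t > 0. \<forall>x. (\<integral>\<^sup>+y. ennreal (\<bar>heat t (x - y) / weight m a xb y\<bar> powr q) \<partial>lborel)
           \<le> ennreal (C * t powr ((real CARD('n) * (1 - q) - (\<Sum>j<m. a j) * q) / 2))"
proof -
  define n where "n = real CARD('n)"
  define b where "b = (\<Sum>j<m. a j) * q"
  define C where "C = real m * (4 * pi) powr (- n / 2 * q) * pi powr ((n - 1) / 2) * (2 / (1 - b) + sqrt pi)
    * (q / 4) powr (- (n - b) / 2)"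
  have scaling: "real m * (4 * pi * t) powr (- n / 2 * q)
      * (pi powr ((n - 1) / 2) * (2 / (1 - b) + sqrt pi) * (q / (4 * t)) powr (- (n - b) / 2))
    = C * t powr ((n * (1 - q) - b) / 2)" for t :: real
  proof -
    have "(q / (4 * t)) powr (- (n - b) / 2) = (q / 4) powr (- (n - b) / 2) * inverse (t powr (- (n - b) / 2))"
      by (metis divide_divide_eq_left powr_divide divide_inverse)
    also have "inverse (t powr (- (n - b) / 2)) = t powr ((n - b) / 2)"
      by (metis powr_minus minus_divide_left minus_minus)
    finally have k_scaling: "(q / (4 * t)) powr (- (n - b) / 2) = (q / 4) powr (- (n - b) / 2) * t powr ((n - b) / 2)" .
    have "(n * (1 - q) - b) / 2 = - n / 2 * q + (n - b) / 2"
      by (simp add: field_simps)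
    then have "t powr ((n * (1 - q) - b) / 2) = t powr (- n / 2 * q) * t powr ((n - b) / 2)"
      by (metis powr_add)
    then show ?thesis
      unfolding C_def k_scaling powr_mult[of "4 * pi" t] by (simp only: mult_ac)
  qed
  have "b < 1"
    using b_lt by (simp add: b_def)
  then have "C \<ge> 0"
    unfolding C_def by (intro mult_nonneg_nonneg add_nonneg_nonneg divide_nonneg_nonneg) auto
  moreover have "(\<integral>\<^sup>+y. ennreal (\<bar>heat t (x - y) / weight m a xb y\<bar> powr q) \<partial>lborel)
      \<le> ennreal (C * t powr ((n * (1 - q) - b) / 2))" if "t > 0" for t x
    using nn_integral_heat_over_weight_powr_le[OF m q that a b_lt, of x xb]
    unfolding n_def[symmetric] b_def[symmetric] scaling .
  ultimately show ?thesis
    unfolding n_def b_def by blast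
qed

lemma abs_integral_le_Lpw_Holder:
  fixes k w g :: "real ^ 'n::finite \<Rightarrow> real"
  assumes [measurable]: "k \<in> borel_measurable borel" "w \<in> borel_measurable borel"
    and w: "AE y in lborel. w y \<noteq> 0" and g: "in_Lpw p w g"
    and pq: "p > 1" "q > 1" "1 / p + 1 / q = 1"
    and k: "(\<integral>\<^sup>+y. ennreal (\<bar>k y / w y\<bar> powr q) \<partial>lborel) \<le> ennreal A" and A: "A \<ge> 0"
  shows "\<bar>\<integral>y. k y * g y \<partial>lborel\<bar> \<le> A powr (1 / q) * Lpw_norm p w g"
proof (cases "integrable lborel (\<lambda>y. k y * g y)")
  case True
  define B where "B = (\<integral>y. \<bar>w y * g y\<bar> powr p \<partial>lborel)"
  have [measurable]: "g \<in> borel_measurable borel"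
    using g by (simp add: in_Lpw_def)
  have B: "(\<integral>\<^sup>+y. ennreal (\<bar>w y * g y\<bar> powr p) \<partial>lborel) = ennreal B" "B \<ge> 0"
    using g unfolding B_def in_Lpw_def by (auto intro: nn_integral_eq_integral integral_nonneg_AE)
  have "ennreal \<bar>\<integral>y. k y * g y \<partial>lborel\<bar> \<le> (\<integral>\<^sup>+y. ennreal (norm (k y * g y)) \<partial>lborel)"
    using integral_norm_bound_ennreal[OF True] by simp
  also have "\<dots> = (\<integral>\<^sup>+y. ennreal (\<bar>k y / w y\<bar> * \<bar>w y * g y\<bar>) \<partial>lborel)"
  proof (rule nn_integral_cong_AE)
    show "AE y in lborel. ennreal (norm (k y * g y)) = ennreal (\<bar>k y / w y\<bar> * \<bar>w y * g y\<bar>)"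
      using w by eventually_elim (simp add: abs_mult)
  qed
  also have "\<dots> \<le> ennreal (A powr (1 / q) * B powr (1 / p))"
    using pq k B A by (intro nn_integral_mult_le_Holder) auto
  finally show ?thesis
    by (simp add: Lpw_norm_def B_def)
next
  case False
  then show ?thesis
    by (simp add: not_integrable_integral_eq Lpw_norm_def)
qed

lemma heat_conv_Lpw_bound:
  fixes xb :: "nat \<Rightarrow> real ^ 'n::finite"
  assumes n: "CARD('n) \<ge> 2" and p: "p > real CARD('n)" and a: "\<And>j. j < m \<Longrightarrow> a j \<ge> 0"
    and sum_a: "(\<Sum>j<m. a j) = 1 - real CARD('n) / p"
  shows "\<exists>C. \<forall>g t x. in_Lpw p (weight m a xb) g \<and> t > 0 \<longrightarrow>
           sqrt t * \<bar>heat_conv g t x\<bar> \<le> C * Lpw_norm p (weight m a xb) g"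
proof -
  define q where "q = p / (p - 1)"
  have p1: "p > 1"
    using n p by linarith
  have q: "q > 0" "q > 1" "1 / p + 1 / q = 1"
    using p1 by (auto simp: q_def field_simps)
  have m: "m > 0"
    using sum_a p p1 by (intro Nat.gr0I) (auto simp: field_simps)
  txt \<open>Since \<open>\<Sum>a = 1 - n/p\<close>, the exponent \<open>q \<Sum>a = (p - n)/(p - 1)\<close> of the singularity is below \<open>1\<close>
    exactly when \<open>n > 1\<close>, and the power of \<open>t\<close> comes out as \<open>-q/2\<close>.\<close>
  have sum_a_q: "(\<Sum>j<m. a j) * q = (p - real CARD('n)) / (p - 1)"
    using p1 by (simp add: sum_a q_def field_simps)
  have "(\<Sum>j<m. a j) * q < 1"
    using p1 n by (simp add: sum_a_q)
  moreover have "real CARD('n) * (1 - q) - (\<Sum>j<m. a j) * q = - q"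
    unfolding sum_a_q using p1 by (simp add: q_def field_simps)
  ultimately obtain C where C: "C \<ge> 0"
    and kernel: "\<And>t x. t > 0 \<Longrightarrow> (\<integral>\<^sup>+y. ennreal (\<bar>heat t (x - y) / weight m a xb y\<bar> powr q) \<partial>lborel)
      \<le> ennreal (C * t powr (- q / 2))"
    using nn_integral_heat_over_weight_powr_bound[of m q a xb, OF m q(1) a] by auto
  have "sqrt t * \<bar>heat_conv g t x\<bar> \<le> C powr (1 / q) * Lpw_norm p (weight m a xb) g"
    if g: "in_Lpw p (weight m a xb) g" and t: "t > 0" for g t x
  proof -
    have "\<bar>heat_conv g t x\<bar> \<le> (C * t powr (- q / 2)) powr (1 / q) * Lpw_norm p (weight m a xb) g"
      unfolding heat_conv_def
      by (rule abs_integral_le_Lpw_Holder[OF _ _ AE_weight_neq_0 g p1 q(2,3) kernel[OF t]]) (use C in auto)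
    also have "(C * t powr (- q / 2)) powr (1 / q) = C powr (1 / q) * t powr (- 1 / 2)"
      using C q by (simp add: powr_mult powr_powr)
    finally have "sqrt t * \<bar>heat_conv g t x\<bar> \<le> sqrt t * (C powr (1 / q) * t powr (- 1 / 2) * Lpw_norm p (weight m a xb) g)"
      by (rule mult_left_mono) (use t in auto)
    also have "\<dots> = C powr (1 / q) * Lpw_norm p (weight m a xb) g * (sqrt t * t powr (- 1 / 2))"
      by (simp only: ac_simps)
    also have "sqrt t * t powr (- 1 / 2) = 1"
      using t by (simp add: powr_half_sqrt[symmetric] powr_add[symmetric])
    finally show ?thesis
      by simp
  qed
  then show ?thesis
    by blast
qed

lemma heat_conv_measurable [measurable]:
  fixes g :: "real ^ 'n::finite \<Rightarrow> real"
  assumes [measurable]: "g \<in> borel_measurable lborel"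
  shows "heat_conv g t \<in> borel_measurable lborel"
proof -
  have "(\<lambda>(x, y). heat t (x - y) * g y) \<in> borel_measurable (lborel \<Otimes>\<^sub>M (lborel :: (real ^ 'n) measure))"
    unfolding heat_def by measurable
  then show ?thesis
    unfolding heat_conv_def[abs_def] by (rule lborel.borel_measurable_lebesgue_integral)
qed

lemma ereal_mult_Linf_norm_le:
  assumes "f \<in> borel_measurable lborel" and s: "s > 0" and "\<And>x. s * \<bar>f x\<bar> \<le> B"
  shows "ereal s * Linf_norm f \<le> ereal B"
proof -
  have "Linf_norm f \<le> ereal (B / s)"
    unfolding Linf_norm_def using assms by (intro esssup_I) (auto simp: field_simps)
  then have "ereal s * Linf_norm f \<le> ereal s * ereal (B / s)"
    using s by (intro ereal_mult_left_mono) auto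
  then show ?thesis
    using s by simp
qed

theorem lemma3:
  fixes p :: real and m :: nat and a :: "nat \<Rightarrow> real"
    and xb :: "nat \<Rightarrow> real ^ 'n::{finite,linorder}"
  assumes "CARD('n) \<ge> 3"
    and "p > real CARD('n)"
    and "\<And>j. j < m \<Longrightarrow> a j \<ge> 0"
    and "(\<Sum>j<m. a j) = 1 - real CARD('n) / p"
    and "\<And>j. j < m \<Longrightarrow> xb j \<in> upper_half"
  shows "\<exists>c. \<forall>g t. in_Lpw p (weight m a xb) g \<and> t > 0 \<longrightarrow>
           ereal (sqrt t) * Linf_norm (heat_conv g t) \<le> ereal c * ereal (Lpw_norm p (weight m a xb) g)"
proof -
  obtain C where C: "\<And>g t x. in_Lpw p (weight m a xb) g \<Longrightarrow> t > 0 \<Longrightarrow>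
      sqrt t * \<bar>heat_conv g t x\<bar> \<le> C * Lpw_norm p (weight m a xb) g"
    using heat_conv_Lpw_bound[of p m a xb] assms(1-4) by fastforce
  have "ereal (sqrt t) * Linf_norm (heat_conv g t) \<le> ereal (C * Lpw_norm p (weight m a xb) g)"
    if "in_Lpw p (weight m a xb) g" and "t > 0" for g t
    using that C by (intro ereal_mult_Linf_norm_le heat_conv_measurable) (auto simp: in_Lpw_def)
  then show ?thesis
    by (intro exI[of _ C]) auto
qed

end
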